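(* Assume each operator $L_r:Lip_d(I)\to Lip_d(I)$, $r\in\mathbb{N}$, is continuous. Then the non-stationary fractal operator $\mathfrak{F}^\alpha_b:Lip_d(I)\to C(I)$, $\mathfrak{F}^\alpha_b(f)=f^\alpha_b$, is continuous.
   Context: Setting: $I=[x_0,x_N]$ with partition $\Delta: x_0<x_1<\dots<x_N$, $I_i=[x_{i-1},x_i]$, $l_i:I\to I_i$ the increasing affine bijection $l_i(x)=\frac{x_i-x_{i-1}}{x_N-x_0}x+\frac{x_Nx_{i-1}-x_0x_i}{x_N-x_0}$, and $Q_i=l_i^{-1}$. Scaling functions $\alpha_{i,r}:I\to\mathbb{R}$ ($i=1,\dots,N$, $r\in\mathbb{N}$) are continuous with $\|\alpha\|_\infty:=\sup_{r}\max_i\|\alpha_{i,r}\|_\infty<1$. $Lip_d(I)$ ($0<d\le1$) is the space of real functions $g$ on $I$ with $\sup_{x\ne y}|g(x)-g(y)|/|x-y|^d<\infty$, regarded as a subset of $C(I)$ with the supremum norm (all topologies here are those of the supremum norm). $L_r:Lip_d(I)\to Lip_d(I)$ ($r\in\mathbb{N}$) are operators (not necessarily linear) with $(L_rg)(x_0)=g(x_0)$, $(L_rg)(x_N)=g(x_N)$ for all $g$, and $\sup_r\|L_r\|_\infty<\infty$, where $\|L_r\|_\infty=\sup_{g\ne0}\|L_rg\|_\infty/\|g\|_\infty$. Non-stationary $\alpha$-fractal function: for $f\in C(I)$ and base functions $b_r\in C(I)$ with $b_r(x_0)=f(x_0)$, $b_r(x_N)=f(x_N)$, $\sup_r\|b_r\|_\infty<\infty$,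 let $C_f(I)=\{g\in C(I):g(x_0)=f(x_0),g(x_N)=f(x_N)\}$ and $T^{\alpha_r}:C_f(I)\to C_f(I)$, $(T^{\alpha_r}g)(x)=f(x)+\alpha_{i,r}(Q_i(x))(g-b_r)(Q_i(x))$ for $x\in I_i$. For every $g\in C_f(I)$, $T^{\alpha_1}\circ\cdots\circ T^{\alpha_r}g$ converges uniformly as $r\to\infty$ to a function independent of $g$; this is the non-stationary $\alpha$-fractal function. $f^\alpha_b$ denotes it for $f\in Lip_d(I)$ with $b_r=L_rf$. *)

theory Defs
  imports "HOL-Analysis.Analysis"
begin

text \<open>Partition x 0 < x 1 < ... < x N of I = [x 0, x N]; functions on I are
modelled as total functions real \<Rightarrow> real, only their values on I matter.\<close>

definition lip_on :: "real \<Rightarrow> real set \<Rightarrow> (real \<Rightarrow> real) \<Rightarrow> bool" where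
  "lip_on d S g \<longleftrightarrow> (\<exists>K. \<forall>s\<in>S. \<forall>t\<in>S. \<bar>g s - g t\<bar> \<le> K * \<bar>s - t\<bar> powr d)"

definition sup_dist :: "real set \<Rightarrow> (real \<Rightarrow> real) \<Rightarrow> (real \<Rightarrow> real) \<Rightarrow> real" where
  "sup_dist S g h = (SUP t\<in>S. \<bar>g t - h t\<bar>)"

definition lmap :: "(nat \<Rightarrow> real) \<Rightarrow> nat \<Rightarrow> nat \<Rightarrow> real \<Rightarrow> real" where
  "lmap x N i t = (x i - x (i - 1)) / (x N - x 0) * t
                   + (x N * x (i - 1) - x 0 * x i) / (x N - x 0)"

definition Qmap :: "(nat \<Rightarrow> real) \<Rightarrow> nat \<Rightarrow> nat \<Rightarrow> real \<Rightarrow> real" where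
  "Qmap x N i t = x 0 + (x N - x 0) * (t - x (i - 1)) / (x i - x (i - 1))"

text \<open>Index i with t \<in> I_i = [x(i-1), x i] (the smallest one at knots).\<close>
definition piece :: "(nat \<Rightarrow> real) \<Rightarrow> real \<Rightarrow> nat" where
  "piece x t = (LEAST i. 1 \<le> i \<and> t \<le> x i)"

definition Top :: "(nat \<Rightarrow> real) \<Rightarrow> nat \<Rightarrow> (nat \<Rightarrow> nat \<Rightarrow> real \<Rightarrow> real) \<Rightarrow> nat
     \<Rightarrow> (real \<Rightarrow> real) \<Rightarrow> (real \<Rightarrow> real) \<Rightarrow> (real \<Rightarrow> real) \<Rightarrow> real \<Rightarrow> real" where
  "Top x N \<alpha> r f b g t =
     (if t \<in> {x 0 .. x N} then
        (let i = piece x t; q = Qmap x N i t in f t + \<alpha> i r q * (g q - b q))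
      else f t)"

text \<open>Tcomp r g = (T^{alpha_1} o ... o T^{alpha_r}) g, with b_r = L r f.\<close>
fun Tcomp :: "(nat \<Rightarrow> real) \<Rightarrow> nat \<Rightarrow> (nat \<Rightarrow> nat \<Rightarrow> real \<Rightarrow> real)
     \<Rightarrow> (nat \<Rightarrow> (real \<Rightarrow> real) \<Rightarrow> (real \<Rightarrow> real)) \<Rightarrow> (real \<Rightarrow> real)
     \<Rightarrow> nat \<Rightarrow> (real \<Rightarrow> real) \<Rightarrow> real \<Rightarrow> real" where
  "Tcomp x N \<alpha> L f 0 g = g"
| "Tcomp x N \<alpha> L f (Suc r) g =
     Tcomp x N \<alpha> L f r (Top x N \<alpha> (Suc r) f (L (Suc r) f) g)"

definition fractal :: "(nat \<Rightarrow> real) \<Rightarrow> nat \<Rightarrow> (nat \<Rightarrow> nat \<Rightarrow> real \<Rightarrow> real)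
     \<Rightarrow> (nat \<Rightarrow> (real \<Rightarrow> real) \<Rightarrow> (real \<Rightarrow> real)) \<Rightarrow> (real \<Rightarrow> real) \<Rightarrow> real \<Rightarrow> real" where
  "fractal x N \<alpha> L f t = lim (\<lambda>r. Tcomp x N \<alpha> L f r f t)"

end

theory Submission
  imports Defs
begin

text \<open>Every factor T^{alpha_r} is a c-contraction in g, uniformly in r, so
  T^{alpha_1} o ... o T^{alpha_r} f converges geometrically, with a tail after K factors
  of order c^K that is uniform over functions with a common sup bound (the operators L_r
  are uniformly bounded).  The first K factors involve only f and L_1 f, ..., L_K f and
  depend on them in a Lipschitz way; since finitely many continuous L_k admit a common
  delta, f^alpha_b and h^alpha_b are close once h is close enough to f.\<close>

lemma finite_uniform_delta:
  fixes P :: "'a \<Rightarrow> real \<Rightarrow> bool"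
  assumes "finite K" and "\<And>k. k \<in> K \<Longrightarrow> \<exists>\<delta>>0. P k \<delta>"
    and shrink: "\<And>k \<delta> \<delta>'. P k \<delta> \<Longrightarrow> 0 < \<delta>' \<Longrightarrow> \<delta>' \<le> \<delta> \<Longrightarrow> P k \<delta>'"
  shows "\<exists>\<delta>>0. \<forall>k\<in>K. P k \<delta>"
proof -
  obtain D where D: "\<And>k. k \<in> K \<Longrightarrow> 0 < D k \<and> P k (D k)"
    using assms(2) by metis
  define \<delta> where "\<delta> = Min (insert 1 (D ` K))"
  have "0 < \<delta>" using D \<open>finite K\<close> by (auto simp: \<delta>_def)
  moreover have "\<delta> \<le> D k" if "k \<in> K" for k
    using that \<open>finite K\<close> by (simp add: \<delta>_def)
  ultimately show ?thesis using D shrink by blast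
qed

lemma abs_lim_minus_le_geometric:
  fixes a :: "nat \<Rightarrow> real"
  assumes c: "0 \<le> c" "c < 1" and tail: "\<And>m n. \<bar>a (m + n) - a m\<bar> \<le> c ^ m * C"
  shows "\<bar>lim a - a m\<bar> \<le> c ^ m * C"
proof -
  have "(\<lambda>n. c ^ n * C) \<longlonglongrightarrow> 0"
    using LIMSEQ_power_zero[of c] c tendsto_mult_left_zero by auto
  have "Cauchy a"
  proof (rule metric_CauchyI)
    fix e :: real assume "0 < e"
    with \<open>(\<lambda>n. c ^ n * C) \<longlonglongrightarrow> 0\<close> obtain M where M: "c ^ M * C < e / 2"
      by (metis half_gt_zero order_tendstoD(2) eventually_sequentially order_refl)
    have "dist (a m) (a n) < e" if "M \<le> m" "M \<le> n" for m n
      using tail[of M "m - M"] tail[of M "n - M"] that M by (simp add: dist_real_def)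
    then show "\<exists>M. \<forall>m\<ge>M. \<forall>n\<ge>M. dist (a m) (a n) < e" by blast
  qed
  then have "(\<lambda>n. \<bar>a (n + m) - a m\<bar>) \<longlonglongrightarrow> \<bar>lim a - a m\<bar>"
    by (intro tendsto_intros LIMSEQ_ignore_initial_segment)
      (simp add: Cauchy_convergent_iff convergent_LIMSEQ_iff)
  then show ?thesis
    by (rule LIMSEQ_le_const2) (metis tail add.commute)
qed

lemma lip_on_bounded:
  assumes "lip_on d {a..b} g" and "0 \<le> d"
  shows "\<exists>B\<ge>0. \<forall>t\<in>{a..b}. \<bar>g t\<bar> \<le> B"
proof -
  obtain K where K: "\<forall>s\<in>{a..b}. \<forall>t\<in>{a..b}. \<bar>g s - g t\<bar> \<le> K * \<bar>s - t\<bar> powr d"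
    using assms(1) unfolding lip_on_def by blast
  have "\<bar>g t\<bar> \<le> \<bar>g a\<bar> + \<bar>K\<bar> * (b - a) powr d" if t: "t \<in> {a..b}" for t
  proof -
    have "\<bar>g t - g a\<bar> \<le> K * \<bar>t - a\<bar> powr d"
      using K t by (metis atLeastAtMost_iff order_refl order_trans)
    also have "\<dots> \<le> \<bar>K\<bar> * (b - a) powr d"
      using t \<open>0 \<le> d\<close> by (intro mult_mono powr_mono2) auto
    finally show ?thesis by linarith
  qed
  then show ?thesis by (meson abs_ge_zero order.trans)
qed

lemma abs_le_sup_dist:
  assumes "\<forall>s\<in>S. \<bar>u s\<bar> \<le> Bu" "\<forall>s\<in>S. \<bar>v s\<bar> \<le> Bv" "t \<in> S"
  shows "\<bar>u t - v t\<bar> \<le> sup_dist S u v"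
  unfolding sup_dist_def
proof (rule cSUP_upper[OF \<open>t \<in> S\<close>])
  have "\<bar>u s - v s\<bar> \<le> Bu + Bv" if "s \<in> S" for s
    using assms(1,2) that abs_triangle_ineq4[of "u s" "v s"] by fastforce
  then show "bdd_above ((\<lambda>s. \<bar>u s - v s\<bar>) ` S)" by (rule bdd_aboveI2)
qed

lemma lip_on_abs_le_sup_dist:
  assumes "lip_on d {a..b} u" "lip_on d {a..b} v" "0 \<le> d" "t \<in> {a..b}"
  shows "\<bar>u t - v t\<bar> \<le> sup_dist {a..b} u v"
  using lip_on_bounded[OF assms(1,3)] lip_on_bounded[OF assms(2,3)] abs_le_sup_dist assms(4)
  by metis

lemma sup_dist_le:
  assumes "S \<noteq> {}" "\<forall>t\<in>S. \<bar>u t - v t\<bar> \<le> B"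
  shows "sup_dist S u v \<le> B"
  unfolding sup_dist_def using assms by (intro cSUP_least) auto

lemma sup_dist_const_zero: "S \<noteq> {} \<Longrightarrow> sup_dist S (\<lambda>_. a) (\<lambda>_. 0) = \<bar>a\<bar>"
  by (simp add: sup_dist_def)

lemma lip_on_const: "lip_on d S (\<lambda>_. a)"
  unfolding lip_on_def by (intro exI[of _ 0]) simp

lemma finite_family_uniform_delta:
  assumes "0 \<le> d" "finite K" "0 < \<eta>" and f: "lip_on d {a..b} f"
    and T_lip: "\<And>k g. k \<in> K \<Longrightarrow> lip_on d {a..b} g \<Longrightarrow> lip_on d {a..b} (T k g)"
    and T_cont: "\<And>k g e. k \<in> K \<Longrightarrow> lip_on d {a..b} g \<Longrightarrow> e > 0 \<Longrightarrow>
                   \<exists>\<delta>>0. \<forall>h. lip_on d {a..b} h \<and> sup_dist {a..b} g h < \<delta>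
                         \<longrightarrow> sup_dist {a..b} (T k g) (T k h) < e"
  obtains \<delta> where "0 < \<delta>"
    and "\<And>h s. lip_on d {a..b} h \<Longrightarrow> sup_dist {a..b} f h < \<delta> \<Longrightarrow> s \<in> {a..b} \<Longrightarrow>
           \<bar>f s - h s\<bar> \<le> \<eta> \<and> (\<forall>k\<in>K. \<bar>T k f s - T k h s\<bar> \<le> \<eta>)"
proof -
  have "\<exists>\<delta>>0. \<forall>k\<in>K. \<forall>h. lip_on d {a..b} h \<and> sup_dist {a..b} f h < \<delta> \<longrightarrow>
      sup_dist {a..b} (T k f) (T k h) < \<eta>"
    using T_cont[OF _ f \<open>0 < \<eta>\<close>] by (intro finite_uniform_delta[OF \<open>finite K\<close>]) auto
  then obtain \<delta> where "0 < \<delta>" and \<delta>: "\<And>k h. k \<in> K \<Longrightarrow> lip_on d {a..b} h \<Longrightarrow>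
      sup_dist {a..b} f h < \<delta> \<Longrightarrow> sup_dist {a..b} (T k f) (T k h) < \<eta>"
    by blast
  show ?thesis
  proof (rule that[of "min \<delta> \<eta>"])
    fix h s assume h: "lip_on d {a..b} h" and fh: "sup_dist {a..b} f h < min \<delta> \<eta>"
      and s: "s \<in> {a..b}"
    have "\<bar>T k f s - T k h s\<bar> \<le> \<eta>" if "k \<in> K" for k
      using lip_on_abs_le_sup_dist[OF T_lip T_lip \<open>0 \<le> d\<close> s] \<delta>[OF that h] that f h fh
      by fastforce
    moreover have "\<bar>f s - h s\<bar> \<le> \<eta>"
      using lip_on_abs_le_sup_dist[OF f h \<open>0 \<le> d\<close> s] fh by simp
    ultimately show "\<bar>f s - h s\<bar> \<le> \<eta> \<and> (\<forall>k\<in>K. \<bar>T k f s - T k h s\<bar> \<le> \<eta>)" by blast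
  qed (use \<open>0 < \<delta>\<close> \<open>0 < \<eta>\<close> in simp)
qed

lemma operator_bound_nonneg:
  assumes "a \<le> b" "0 \<le> d"
    and T_lip: "\<And>g. lip_on d {a..b} g \<Longrightarrow> lip_on d {a..b} (T g)"
    and T_bound: "\<And>g. lip_on d {a..b} g \<Longrightarrow> (\<exists>t\<in>{a..b}. g t \<noteq> 0) \<Longrightarrow>
                     sup_dist {a..b} (T g) (\<lambda>_. 0) \<le> M * sup_dist {a..b} g (\<lambda>_. 0)"
  shows "0 \<le> M"
proof -
  have "0 \<le> sup_dist {a..b} (T (\<lambda>_. 1)) (\<lambda>_. 0)"
    using lip_on_abs_le_sup_dist[OF T_lip lip_on_const \<open>0 \<le> d\<close>] lip_on_const \<open>a \<le> b\<close>
    by (meson abs_ge_zero atLeastAtMost_iff order.trans order_refl)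
  also have "\<dots> \<le> M"
    using T_bound[OF lip_on_const, of 1] sup_dist_const_zero[of "{a..b}" 1] \<open>a \<le> b\<close> by auto
  finally show ?thesis .
qed

text \<open>The bound is only assumed for g not vanishing on {a..b}; for the remaining g,
  continuity of T at g transfers it from small constant functions.\<close>
lemma operator_pointwise_bound:
  assumes "0 \<le> d"
    and T_lip: "\<And>g. lip_on d {a..b} g \<Longrightarrow> lip_on d {a..b} (T g)"
    and T_bound: "\<And>g. lip_on d {a..b} g \<Longrightarrow> (\<exists>t\<in>{a..b}. g t \<noteq> 0) \<Longrightarrow>
                     sup_dist {a..b} (T g) (\<lambda>_. 0) \<le> M * sup_dist {a..b} g (\<lambda>_. 0)"
    and T_cont: "\<And>g e. lip_on d {a..b} g \<Longrightarrow> e > 0 \<Longrightarrow>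
                   \<exists>\<delta>>0. \<forall>h. lip_on d {a..b} h \<and> sup_dist {a..b} g h < \<delta>
                         \<longrightarrow> sup_dist {a..b} (T g) (T h) < e"
    and g: "lip_on d {a..b} g" "\<forall>s\<in>{a..b}. \<bar>g s\<bar> \<le> B" and t: "t \<in> {a..b}"
  shows "\<bar>T g t\<bar> \<le> M * B"
proof -
  have ab: "a \<le> b" and ne: "{a..b} \<noteq> {}" using t by auto
  have M: "0 \<le> M" by (rule operator_bound_nonneg[OF ab \<open>0 \<le> d\<close> T_lip T_bound])
  have T_zero: "\<bar>T h t\<bar> \<le> sup_dist {a..b} (T h) (\<lambda>_. 0)" if "lip_on d {a..b} h" for h
    using lip_on_abs_le_sup_dist[OF T_lip[OF that] lip_on_const[where a = 0] \<open>0 \<le> d\<close> t] by simp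
  show ?thesis
  proof (cases "\<exists>s\<in>{a..b}. g s \<noteq> 0")
    case True
    have "\<bar>T g t\<bar> \<le> M * sup_dist {a..b} g (\<lambda>_. 0)"
      using T_zero[OF g(1)] T_bound[OF g(1) True] by linarith
    also have "\<dots> \<le> M * B"
      using sup_dist_le[OF ne, of g "\<lambda>_. 0" B] g(2) M by (simp add: mult_left_mono)
    finally show ?thesis .
  next
    case False
    have "\<bar>T g t\<bar> \<le> z" if "0 < z" for z
    proof -
      obtain \<delta> where "\<delta> > 0" and \<delta>: "\<And>h. lip_on d {a..b} h \<Longrightarrow> sup_dist {a..b} g h < \<delta>
                         \<Longrightarrow> sup_dist {a..b} (T g) (T h) < z / 2"
        using T_cont[OF g(1), of "z / 2"] \<open>0 < z\<close> by auto
      define \<epsilon> where "\<epsilon> = min (\<delta> / 2) (z / (2 * (M + 1)))"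
      have \<epsilon>: "0 < \<epsilon>" "\<epsilon> < \<delta>" "M * \<epsilon> \<le> z / 2"
        using \<open>\<delta> > 0\<close> \<open>0 < z\<close> M by (auto simp: \<epsilon>_def min_def field_simps)
      have "sup_dist {a..b} g (\<lambda>_. \<epsilon>) \<le> \<epsilon>"
        using False \<epsilon> by (intro sup_dist_le[OF ne]) auto
      then have "\<bar>T g t - T (\<lambda>_. \<epsilon>) t\<bar> < z / 2"
        using \<delta>[OF lip_on_const] lip_on_abs_le_sup_dist[OF T_lip T_lip \<open>0 \<le> d\<close> t] g(1)
          lip_on_const \<epsilon>
        by (meson le_less_trans)
      moreover have "\<bar>T (\<lambda>_. \<epsilon>) t\<bar> \<le> M * \<epsilon>"
        using T_zero[OF lip_on_const[where a = \<epsilon>]] T_bound[OF lip_on_const, of \<epsilon>] \<epsilon> t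
          sup_dist_const_zero[OF ne, of \<epsilon>] by fastforce
      ultimately show ?thesis using \<epsilon> by linarith
    qed
    then have "\<bar>T g t\<bar> \<le> 0" by (rule field_le_epsilon[where y = 0, simplified])
    moreover have "0 \<le> B" using g(2) t by (meson abs_ge_zero order.trans)
    ultimately show ?thesis using M by (simp add: order.trans)
  qed
qed

locale partition =
  fixes x :: "nat \<Rightarrow> real" and N :: nat
  assumes N_pos: "1 \<le> N" and partition_step: "\<And>i. i < N \<Longrightarrow> x i < x (Suc i)"
begin

abbreviation I :: "real set" where "I \<equiv> {x 0 .. x N}"

lemma x_strict_mono: "i < j \<Longrightarrow> j \<le> N \<Longrightarrow> x i < x j"
proof (induction j)
  case (Suc j)
  then show ?case using partition_step[of j] by (cases "i = j") auto
qed simp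

lemma x0_less_xN: "x 0 < x N"
  using x_strict_mono N_pos by simp

lemma abs_bound_nonneg:
  fixes g :: "real \<Rightarrow> real"
  assumes "\<forall>s\<in>I. \<bar>g s\<bar> \<le> B"
  shows "0 \<le> B"
proof -
  have "x 0 \<in> I" using x0_less_xN by simp
  with assms show ?thesis by (meson abs_ge_zero order.trans)
qed

lemma piece_bounds:
  assumes "t \<in> I"
  shows "1 \<le> piece x t" "piece x t \<le> N" "x (piece x t - 1) \<le> t" "t \<le> x (piece x t)"
proof -
  let ?i = "piece x t"
  have ex: "1 \<le> N \<and> t \<le> x N" using N_pos assms by simp
  show i: "1 \<le> ?i" "t \<le> x ?i"
    using LeastI[where P = "\<lambda>i. 1 \<le> i \<and> t \<le> x i", OF ex] unfolding piece_def by auto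
  show "?i \<le> N"
    unfolding piece_def by (rule Least_le[where P = "\<lambda>i. 1 \<le> i \<and> t \<le> x i", OF ex])
  show "x (?i - 1) \<le> t"
  proof (cases "?i = 1")
    case True then show ?thesis using assms by simp
  next
    case False
    then have "\<not> (1 \<le> ?i - 1 \<and> t \<le> x (?i - 1))"
      using not_less_Least[of "?i - 1" "\<lambda>i. 1 \<le> i \<and> t \<le> x i"] i unfolding piece_def by simp
    then show ?thesis using False i by auto
  qed
qed

lemma Qmap_piece_in_I:
  assumes "t \<in> I"
  shows "Qmap x N (piece x t) t \<in> I"
proof -
  let ?a = "x (piece x t - 1)" and ?b = "x (piece x t)"
  have ab: "?a \<le> t" "t \<le> ?b" "?a < ?b"
    using piece_bounds[OF assms] x_strict_mono[of "piece x t - 1" "piece x t"] by auto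
  have "(x N - x 0) * (t - ?a) \<le> (x N - x 0) * (?b - ?a)"
    using ab x0_less_xN by (intro mult_left_mono) auto
  then have "(x N - x 0) * (t - ?a) / (?b - ?a) \<le> x N - x 0"
    using ab by (simp add: divide_le_eq)
  moreover have "0 \<le> (x N - x 0) * (t - ?a) / (?b - ?a)"
    using ab x0_less_xN by simp
  ultimately show ?thesis by (simp add: Qmap_def)
qed

end

text \<open>Tblock m n g = (T^{alpha_(m+1)} o ... o T^{alpha_(m+n)}) g, the factors of Tcomp
  beyond the m-th.\<close>
fun Tblock :: "(nat \<Rightarrow> real) \<Rightarrow> nat \<Rightarrow> (nat \<Rightarrow> nat \<Rightarrow> real \<Rightarrow> real)
     \<Rightarrow> (nat \<Rightarrow> (real \<Rightarrow> real) \<Rightarrow> (real \<Rightarrow> real)) \<Rightarrow> (real \<Rightarrow> real)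
     \<Rightarrow> nat \<Rightarrow> nat \<Rightarrow> (real \<Rightarrow> real) \<Rightarrow> real \<Rightarrow> real" where
  "Tblock x N \<alpha> L f m 0 g = g"
| "Tblock x N \<alpha> L f m (Suc n) g =
     Tblock x N \<alpha> L f m n (Top x N \<alpha> (Suc (m + n)) f (L (Suc (m + n)) f) g)"

lemma Tcomp_add: "Tcomp x N \<alpha> L f (m + n) g = Tcomp x N \<alpha> L f m (Tblock x N \<alpha> L f m n g)"
  by (induction n arbitrary: g) auto

locale scaled_partition = partition +
  fixes \<alpha> :: "nat \<Rightarrow> nat \<Rightarrow> real \<Rightarrow> real" and c :: real
  assumes scaling_bound: "\<And>i r t. 1 \<le> i \<Longrightarrow> i \<le> N \<Longrightarrow> 1 \<le> r \<Longrightarrow> t \<in> I \<Longrightarrow> \<bar>\<alpha> i r t\<bar> \<le> c"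
begin

lemma c_nonneg: "0 \<le> c"
  by (rule abs_bound_nonneg[of "\<alpha> 1 1"]) (use scaling_bound N_pos in auto)

lemma Top_diff_le:
  assumes t: "t \<in> I" and r: "1 \<le> r"
    and f: "\<bar>f t - f' t\<bar> \<le> Ef"
    and g: "\<forall>s\<in>I. \<bar>g s - g' s\<bar> \<le> Kg" and b: "\<forall>s\<in>I. \<bar>b s - b' s\<bar> \<le> Kb"
  shows "\<bar>Top x N \<alpha> r f b g t - Top x N \<alpha> r f' b' g' t\<bar> \<le> Ef + c * (Kg + Kb)"
proof -
  let ?i = "piece x t" let ?q = "Qmap x N ?i t"
  have q: "?q \<in> I" by (rule Qmap_piece_in_I[OF t])
  have "\<bar>\<alpha> ?i r ?q\<bar> \<le> c" using scaling_bound piece_bounds[OF t] q r by blast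
  moreover have "\<bar>(g ?q - g' ?q) - (b ?q - b' ?q)\<bar> \<le> Kg + Kb"
    using g b q abs_triangle_ineq4[of "g ?q - g' ?q" "b ?q - b' ?q"] by fastforce
  ultimately have "\<bar>\<alpha> ?i r ?q * ((g ?q - g' ?q) - (b ?q - b' ?q))\<bar> \<le> c * (Kg + Kb)"
    unfolding abs_mult by (intro mult_mono) auto
  moreover have "Top x N \<alpha> r f b g t - Top x N \<alpha> r f' b' g' t
      = (f t - f' t) + \<alpha> ?i r ?q * ((g ?q - g' ?q) - (b ?q - b' ?q))"
    using t by (simp add: Top_def Let_def algebra_simps)
  ultimately show ?thesis using f abs_triangle_ineq[of "f t - f' t"] by linarith
qed

lemma Top_abs_le:
  assumes "t \<in> I" "1 \<le> r" "\<bar>f t\<bar> \<le> Bf" "\<forall>s\<in>I. \<bar>g s\<bar> \<le> Bg" "\<forall>s\<in>I. \<bar>b s\<bar> \<le> Bb"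
  shows "\<bar>Top x N \<alpha> r f b g t\<bar> \<le> Bf + c * (Bg + Bb)"
  using Top_diff_le[of t r f "\<lambda>_. 0" Bf g "\<lambda>_. 0" Bg b "\<lambda>_. 0" Bb] assms
  by (simp add: Top_def Let_def)

lemma Tcomp_contraction:
  assumes "\<forall>s\<in>I. \<bar>g s - g' s\<bar> \<le> K"
  shows "\<forall>s\<in>I. \<bar>Tcomp x N \<alpha> L f r g s - Tcomp x N \<alpha> L f r g' s\<bar> \<le> c ^ r * K"
  using assms
proof (induction r arbitrary: g g' K)
  case (Suc r)
  have "\<forall>s\<in>I. \<bar>Top x N \<alpha> (Suc r) f (L (Suc r) f) g s
           - Top x N \<alpha> (Suc r) f (L (Suc r) f) g' s\<bar> \<le> c * K"
    using Top_diff_le[of _ "Suc r" f f 0 g g' K "L (Suc r) f" "L (Suc r) f" 0] Suc.prems by simp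
  from Suc.IH[OF this] show ?case by (simp add: ac_simps)
qed simp

lemma Tcomp_diff_le:
  assumes "\<forall>s\<in>I. \<bar>f s - h s\<bar> \<le> \<eta>"
    and "\<And>k s. 1 \<le> k \<Longrightarrow> k \<le> r \<Longrightarrow> s \<in> I \<Longrightarrow> \<bar>L k f s - L k h s\<bar> \<le> \<eta>"
    and invariant: "\<eta> + c * (X + \<eta>) \<le> X"
    and "\<forall>s\<in>I. \<bar>g s - g' s\<bar> \<le> X"
  shows "\<forall>s\<in>I. \<bar>Tcomp x N \<alpha> L f r g s - Tcomp x N \<alpha> L h r g' s\<bar> \<le> X"
  using assms(2,4)
proof (induction r arbitrary: g g')
  case (Suc r)
  have "\<forall>s\<in>I. \<bar>Top x N \<alpha> (Suc r) f (L (Suc r) f) g s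
           - Top x N \<alpha> (Suc r) h (L (Suc r) h) g' s\<bar> \<le> \<eta> + c * (X + \<eta>)"
    using Top_diff_le[of _ "Suc r" f h \<eta> g g' X] assms(1) Suc.prems by simp
  with invariant have "\<forall>s\<in>I. \<bar>Top x N \<alpha> (Suc r) f (L (Suc r) f) g s
           - Top x N \<alpha> (Suc r) h (L (Suc r) h) g' s\<bar> \<le> X"
    by fastforce
  with Suc show ?case by simp
qed simp

lemma Tblock_abs_le:
  assumes "\<forall>s\<in>I. \<bar>f s\<bar> \<le> B" and "\<And>k s. 1 \<le> k \<Longrightarrow> s \<in> I \<Longrightarrow> \<bar>L k f s\<bar> \<le> Bb"
    and invariant: "B + c * (R + Bb) \<le> R"
    and "\<forall>s\<in>I. \<bar>g s\<bar> \<le> R"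
  shows "\<forall>s\<in>I. \<bar>Tblock x N \<alpha> L f m n g s\<bar> \<le> R"
  using assms(4)
proof (induction n arbitrary: g)
  case (Suc n)
  have "\<forall>s\<in>I. \<bar>Top x N \<alpha> (Suc (m + n)) f (L (Suc (m + n)) f) g s\<bar> \<le> R"
  proof
    fix s assume "s \<in> I"
    then have "\<bar>Top x N \<alpha> (Suc (m + n)) f (L (Suc (m + n)) f) g s\<bar> \<le> B + c * (R + Bb)"
      using assms(1,2) Suc.prems by (intro Top_abs_le) auto
    with invariant show "\<bar>Top x N \<alpha> (Suc (m + n)) f (L (Suc (m + n)) f) g s\<bar> \<le> R" by linarith
  qed
  then show ?case using Suc.IH by simp
qed simp

lemma fractal_tail_le:
  assumes "c < 1" and f: "\<forall>s\<in>I. \<bar>f s\<bar> \<le> B"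
    and Lf: "\<And>k s. 1 \<le> k \<Longrightarrow> s \<in> I \<Longrightarrow> \<bar>L k f s\<bar> \<le> Bb" and t: "t \<in> I"
  shows "\<bar>fractal x N \<alpha> L f t - Tcomp x N \<alpha> L f m f t\<bar> \<le> c ^ m * ((B + c * Bb) / (1 - c) + B)"
proof -
  define R where "R = (B + c * Bb) / (1 - c)"
  have "0 \<le> B" "0 \<le> Bb"
    using abs_bound_nonneg[OF f] abs_bound_nonneg[of "L 1 f" Bb] Lf by auto
  then have "B \<le> R" and invariant: "B + c * (R + Bb) \<le> R"
    using c_nonneg \<open>c < 1\<close> by (auto simp: R_def field_simps)
  have "\<forall>s\<in>I. \<bar>Tblock x N \<alpha> L f m n f s\<bar> \<le> R" for m n
    using Tblock_abs_le[where L = L, OF f Lf invariant] f \<open>B \<le> R\<close> by force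
  then have "\<forall>s\<in>I. \<bar>Tblock x N \<alpha> L f m n f s - f s\<bar> \<le> R + B" for m n
    using f by (auto intro!: order.trans[OF abs_triangle_ineq4] add_mono)
  then have "\<bar>Tcomp x N \<alpha> L f (m + n) f t - Tcomp x N \<alpha> L f m f t\<bar> \<le> c ^ m * (R + B)" for m n
    using Tcomp_contraction[where L = L and f = f and r = m] t by (simp add: Tcomp_add)
  then show ?thesis
    unfolding fractal_def R_def[symmetric]
    by (rule abs_lim_minus_le_geometric[OF c_nonneg \<open>c < 1\<close>])
qed

lemma fractal_diff_le:
  assumes "c < 1" and "\<forall>s\<in>I. \<bar>f s\<bar> \<le> B" "\<forall>s\<in>I. \<bar>h s\<bar> \<le> B"
    and "\<And>k s. 1 \<le> k \<Longrightarrow> s \<in> I \<Longrightarrow> \<bar>L k f s\<bar> \<le> Bb"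
    and "\<And>k s. 1 \<le> k \<Longrightarrow> s \<in> I \<Longrightarrow> \<bar>L k h s\<bar> \<le> Bb"
    and fh: "\<forall>s\<in>I. \<bar>f s - h s\<bar> \<le> \<eta>"
    and Lfh: "\<And>k s. 1 \<le> k \<Longrightarrow> k \<le> K \<Longrightarrow> s \<in> I \<Longrightarrow> \<bar>L k f s - L k h s\<bar> \<le> \<eta>"
    and t: "t \<in> I"
  shows "\<bar>fractal x N \<alpha> L f t - fractal x N \<alpha> L h t\<bar>
           \<le> 2 * (c ^ K * ((B + c * Bb) / (1 - c) + B)) + \<eta> * (1 + c) / (1 - c)"
proof -
  define X where "X = \<eta> * (1 + c) / (1 - c)"
  have "0 \<le> \<eta>" using abs_bound_nonneg[OF fh] .
  then have "\<eta> \<le> X" and invariant: "\<eta> + c * (X + \<eta>) \<le> X"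
    using c_nonneg \<open>c < 1\<close> by (auto simp: X_def field_simps)
  then have "\<bar>Tcomp x N \<alpha> L f K f t - Tcomp x N \<alpha> L h K h t\<bar> \<le> X"
    using Tcomp_diff_le[where L = L and f = f and h = h and r = K and g = f and g' = h,
        OF fh Lfh invariant] fh t by fastforce
  moreover have "\<bar>fractal x N \<alpha> L f t - Tcomp x N \<alpha> L f K f t\<bar>
      \<le> c ^ K * ((B + c * Bb) / (1 - c) + B)"
    using fractal_tail_le[where L = L and f = f] assms(1,2,4) t by blast
  moreover have "\<bar>fractal x N \<alpha> L h t - Tcomp x N \<alpha> L h K h t\<bar>
      \<le> c ^ K * ((B + c * Bb) / (1 - c) + B)"
    using fractal_tail_le[where L = L and f = h] assms(1,3,5) t by blast
  ultimately show ?thesis unfolding X_def by linarith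
qed

lemma fractal_continuous_at:
  assumes "c < 1" "0 \<le> d"
    and L_lip: "\<And>k g. 1 \<le> k \<Longrightarrow> lip_on d I g \<Longrightarrow> lip_on d I (L k g)"
    and L_bound: "\<And>k g B s. 1 \<le> k \<Longrightarrow> lip_on d I g \<Longrightarrow> \<forall>s\<in>I. \<bar>g s\<bar> \<le> B \<Longrightarrow> s \<in> I \<Longrightarrow>
                    \<bar>L k g s\<bar> \<le> M * B"
    and L_cont: "\<And>k g e. 1 \<le> k \<Longrightarrow> lip_on d I g \<Longrightarrow> e > 0 \<Longrightarrow>
                   \<exists>\<delta>>0. \<forall>h. lip_on d I h \<and> sup_dist I g h < \<delta> \<longrightarrow> sup_dist I (L k g) (L k h) < e"
    and f: "lip_on d I f" and "0 < e"
  shows "\<exists>\<delta>>0. \<forall>h. lip_on d I h \<and> sup_dist I f h < \<delta> \<longrightarrow>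
            sup_dist I (fractal x N \<alpha> L f) (fractal x N \<alpha> L h) < e"
proof -
  define \<eta> where "\<eta> = e * (1 - c) / 4"
  have "0 < \<eta>" using \<open>0 < e\<close> \<open>c < 1\<close> by (simp add: \<eta>_def)
  obtain B where "0 \<le> B" and "\<forall>s\<in>I. \<bar>f s\<bar> \<le> B"
    using lip_on_bounded[OF f \<open>0 \<le> d\<close>] by blast
  then have Bf: "\<forall>s\<in>I. \<bar>f s\<bar> \<le> B + \<eta>" using \<open>0 < \<eta>\<close> by force
  define C where "C = (B + \<eta> + c * (M * (B + \<eta>))) / (1 - c) + (B + \<eta>)"
  have "0 \<le> M * (B + \<eta>)"
    using abs_bound_nonneg[of "L 1 f"] L_bound[OF _ f Bf, of 1] by blast
  then have "0 < C"
    using \<open>0 \<le> B\<close> \<open>0 < \<eta>\<close> c_nonneg \<open>c < 1\<close>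
    by (auto simp: C_def intro!: add_nonneg_pos divide_nonneg_pos)
  then obtain K where K: "2 * (c ^ K * C) < e / 2"
    using real_arch_pow_inv[of "e / 4 / C" c] \<open>0 < e\<close> \<open>c < 1\<close> by (auto simp: field_simps)
  obtain \<delta> where "0 < \<delta>" and \<delta>: "\<And>h s. lip_on d I h \<Longrightarrow> sup_dist I f h < \<delta> \<Longrightarrow> s \<in> I \<Longrightarrow>
      \<bar>f s - h s\<bar> \<le> \<eta> \<and> (\<forall>k\<in>{1..K}. \<bar>L k f s - L k h s\<bar> \<le> \<eta>)"
    using finite_family_uniform_delta[OF \<open>0 \<le> d\<close> _ \<open>0 < \<eta>\<close> f, of "{1..K}" L] L_lip L_cont
    by auto
  have "sup_dist I (fractal x N \<alpha> L f) (fractal x N \<alpha> L h) < e"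
    if h: "lip_on d I h" and fh: "sup_dist I f h < \<delta>" for h
  proof -
    have Bh: "\<forall>s\<in>I. \<bar>h s\<bar> \<le> B + \<eta>"
      using \<delta>[OF h fh] \<open>\<forall>s\<in>I. \<bar>f s\<bar> \<le> B\<close>
      by (fastforce intro: order.trans[OF abs_triangle_ineq3])
    have "\<bar>fractal x N \<alpha> L f t - fractal x N \<alpha> L h t\<bar>
        \<le> 2 * (c ^ K * C) + \<eta> * (1 + c) / (1 - c)" if "t \<in> I" for t
      unfolding C_def using L_bound[OF _ f Bf] L_bound[OF _ h Bh] \<delta>[OF h fh] that
      by (intro fractal_diff_le[OF \<open>c < 1\<close> Bf Bh]) auto
    then have "sup_dist I (fractal x N \<alpha> L f) (fractal x N \<alpha> L h)
        \<le> 2 * (c ^ K * C) + \<eta> * (1 + c) / (1 - c)"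
      using x0_less_xN by (intro sup_dist_le) auto
    moreover have "\<eta> * (1 + c) / (1 - c) = e * (1 + c) / 4"
      using \<open>c < 1\<close> by (simp add: \<eta>_def field_simps)
    moreover have "e * (1 + c) / 4 < e / 2"
      using \<open>0 < e\<close> \<open>c < 1\<close> by simp
    ultimately show ?thesis using K by linarith
  qed
  then show ?thesis using \<open>0 < \<delta>\<close> by blast
qed

end

theorem mainTheorem3:
  fixes x :: "nat \<Rightarrow> real" and N :: nat and d :: real
    and \<alpha> :: "nat \<Rightarrow> nat \<Rightarrow> real \<Rightarrow> real"
    and L :: "nat \<Rightarrow> (real \<Rightarrow> real) \<Rightarrow> (real \<Rightarrow> real)"
  assumes N: "N \<ge> 1"
    and part: "\<And>i. i < N \<Longrightarrow> x i < x (Suc i)"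
    and d: "0 < d" "d \<le> 1"
    and \<alpha>_cont: "\<And>i r. 1 \<le> i \<Longrightarrow> i \<le> N \<Longrightarrow> 1 \<le> r \<Longrightarrow> continuous_on {x 0 .. x N} (\<alpha> i r)"
    and \<alpha>_bound: "\<exists>c<1. \<forall>i r t. 1 \<le> i \<and> i \<le> N \<and> 1 \<le> r \<and> t \<in> {x 0 .. x N}
                     \<longrightarrow> \<bar>\<alpha> i r t\<bar> \<le> c"
    and L_lip: "\<And>r g. 1 \<le> r \<Longrightarrow> lip_on d {x 0 .. x N} g \<Longrightarrow> lip_on d {x 0 .. x N} (L r g)"
    and L_ends: "\<And>r g. 1 \<le> r \<Longrightarrow> lip_on d {x 0 .. x N} g \<Longrightarrow>
                   L r g (x 0) = g (x 0) \<and> L r g (x N) = g (x N)"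
    and L_bound: "\<exists>M. \<forall>r g. 1 \<le> r \<and> lip_on d {x 0 .. x N} g \<and> (\<exists>t\<in>{x 0 .. x N}. g t \<noteq> 0)
                     \<longrightarrow> sup_dist {x 0 .. x N} (L r g) (\<lambda>_. 0) \<le> M * sup_dist {x 0 .. x N} g (\<lambda>_. 0)"
    and L_cont: "\<And>r g e. 1 \<le> r \<Longrightarrow> lip_on d {x 0 .. x N} g \<Longrightarrow> e > 0 \<Longrightarrow>
                   \<exists>\<delta>>0. \<forall>h. lip_on d {x 0 .. x N} h \<and> sup_dist {x 0 .. x N} g h < \<delta>
                         \<longrightarrow> sup_dist {x 0 .. x N} (L r g) (L r h) < e"
  shows "\<forall>f. lip_on d {x 0 .. x N} f \<longrightarrow> (\<forall>e>0. \<exists>\<delta>>0. \<forall>h. lip_on d {x 0 .. x N} h \<and>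
            sup_dist {x 0 .. x N} f h < \<delta> \<longrightarrow>
            sup_dist {x 0 .. x N} (fractal x N \<alpha> L f) (fractal x N \<alpha> L h) < e)"
proof (intro allI impI)
  fix f :: "real \<Rightarrow> real" and e :: real
  assume f: "lip_on d {x 0 .. x N} f" and "0 < e"
  obtain c where "c < 1"
    and c: "\<And>i r t. 1 \<le> i \<Longrightarrow> i \<le> N \<Longrightarrow> 1 \<le> r \<Longrightarrow> t \<in> {x 0 .. x N} \<Longrightarrow> \<bar>\<alpha> i r t\<bar> \<le> c"
    using \<alpha>_bound by blast
  interpret scaled_partition x N \<alpha> c
    using N part c by unfold_locales auto
  obtain M where M: "\<And>r g. 1 \<le> r \<Longrightarrow> lip_on d {x 0 .. x N} g \<Longrightarrow> (\<exists>t\<in>{x 0 .. x N}. g t \<noteq> 0) \<Longrightarrow>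
      sup_dist {x 0 .. x N} (L r g) (\<lambda>_. 0) \<le> M * sup_dist {x 0 .. x N} g (\<lambda>_. 0)"
    using L_bound by blast
  have L_pointwise: "\<bar>L k g s\<bar> \<le> M * B" if k: "1 \<le> k" and "lip_on d {x 0 .. x N} g"
    "\<forall>s\<in>{x 0 .. x N}. \<bar>g s\<bar> \<le> B" "s \<in> {x 0 .. x N}" for k g B s
    using operator_pointwise_bound[OF _ L_lip[OF k] M[OF k] L_cont[OF k]] d(1) that by simp
  show "\<exists>\<delta>>0. \<forall>h. lip_on d {x 0 .. x N} h \<and> sup_dist {x 0 .. x N} f h < \<delta> \<longrightarrow>
      sup_dist {x 0 .. x N} (fractal x N \<alpha> L f) (fractal x N \<alpha> L h) < e"
    by (rule fractal_continuous_at[where L = L, OF \<open>c < 1\<close> less_imp_le[OF d(1)] L_lip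
          L_pointwise L_cont f \<open>0 < e\<close>])
qed

end
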